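(* Let $\mathfrak{A}$ be an architecture with $|\mathsf{Procs}|=1$ and $\mathsf{DS}=\mathsf{Stacks}$, and let $\Sigma$ be a finite alphabet. For all $k>0$, there is a sentence $\Phi^k_{\mathsf{context}}\in\mathsf{CPDL}(\mathfrak{A},\Sigma)$ of size $\mathcal{O}(k|\mathsf{DS}|^2)$ such that for every CBM $\mathcal{M}$ over $\mathfrak{A}$ and $\Sigma$, $\mathcal{M}\models\Phi^k_{\mathsf{context}}$ if and only if $\mathcal{M}\in\mathsf{Context}_k$.
   Context: With one process $p$ and only stacks $d\in\mathsf{DS}$ (each with $\mathsf{Writer}(d)=\mathsf{Reader}(d)=p$), a CBM (multiply nested word) over $\mathfrak{A},\Sigma$ is $\mathcal{M}=(a_1\cdots a_n,(\rhd^d)_{d\in\mathsf{DS}})$ with events $\mathcal{E}=\{1,\dots,n\}$, labels $\lambda(i)=a_i$, process successor $i\to i+1$, and $\rhd^d\subseteq\mathcal{E}^2$ such that distinct edges (over all $d$) have four distinct endpoints, $<=(\to\cup\bigcup_d\rhd^d)^+$ is a strict partial order (so every edge goes forward), and each stack is LIFO: $e_1\rhd^d f_1$, $e_2\rhd^d f_2$, $e_1<e_2<f_1$ imply $f_2<f_1$. A context of $\mathcal{M}$ is a possibly empty interval $I=\{e,e+1,\dots,f\}\subseteq\mathcal{E}$ such that whenever $(i,j)\in\rhd^d$ and $(i',j')\in\rhd^{d'}$ with $I\cap\{i,j\}\ne\emptyset$ and $I\cap\{i',j'\}\ne\emptyset$, then $d=d'$. $\mathcal{M}$ is $k$-context-bounded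 if $\mathcal{E}=I_1\cup\dots\cup I_k$ for some contexts $I_1,\dots,I_k$; $\mathsf{Context}_k$ is the set of $k$-context-bounded CBMs. $\mathsf{CPDL}(\mathfrak{A},\Sigma)$ has atomic propositions $\mathsf{Procs}\cup\Sigma$ and atomic programs $\{\to\}\cup\mathsf{DS}$: sentences $\Phi::=\mathsf{E}\sigma\mid\Phi\vee\Phi\mid\neg\Phi$; state formulas $\sigma::=q\mid\sigma\vee\sigma\mid\neg\sigma\mid\langle\pi\rangle\sigma$; path formulas $\pi::=\gamma\mid\mathsf{test}(\sigma)\mid\pi+\pi\mid\pi\cdot\pi\mid\pi^*\mid\pi^{-1}$. Over a CBM, $q$ holds at $e$ iff $q$ is $\lambda(e)$ or the process of $e$; $\to$ denotes process successor and $d$ denotes $\rhd^d$; $\langle\pi\rangle\sigma$ holds at $e$ iff some $f$ with $(e,f)\in[\![\pi]\!]$ satisfies $\sigma$; $\mathsf{test}(\sigma)$ is the identity on $[\![\sigma]\!]$; $+,\cdot,^*,^{-1}$ are union, composition, reflexive-transitive closure and converse; $\mathsf{E}\sigma$ holds iff some event satisfies $\sigma$. Size is formula length. *)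

theory Defs
  imports Main
begin

text \<open>A CBM is a word of labels (events are positions 0..n-1, process successor i -> i+1)
  together with one edge relation per data structure.  The single process is implicit.\<close>

type_synonym ('a, 'd) cbm = "'a list \<times> ('d \<Rightarrow> (nat \<times> nat) set)"

definition events :: "('a, 'd) cbm \<Rightarrow> nat set" where
  "events M = {0..<length (fst M)}"

definition lab :: "('a, 'd) cbm \<Rightarrow> nat \<Rightarrow> 'a" where
  "lab M i = fst M ! i"

definition edges :: "('a, 'd) cbm \<Rightarrow> 'd \<Rightarrow> (nat \<times> nat) set" where
  "edges M d = snd M d"

definition proc_succ :: "('a, 'd) cbm \<Rightarrow> (nat \<times> nat) set" where
  "proc_succ M = {(i, Suc i) | i. Suc i < length (fst M)}"

definition is_CBM :: "'d set \<Rightarrow> 'a set \<Rightarrow> ('a, 'd) cbm \<Rightarrow> bool" where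
  "is_CBM DS Sig M \<longleftrightarrow>
     set (fst M) \<subseteq> Sig \<and>
     (\<forall>d. d \<notin> DS \<longrightarrow> edges M d = {}) \<and>
     (\<forall>d \<in> DS. edges M d \<subseteq> events M \<times> events M) \<and>
     \<comment> \<open>distinct edges (over all d) have four distinct endpoints\<close>
     (\<forall>d d' e f e' f'. (e, f) \<in> edges M d \<longrightarrow> (e', f') \<in> edges M d' \<longrightarrow>
          (d, e, f) \<noteq> (d', e', f') \<longrightarrow> {e, f} \<inter> {e', f'} = {}) \<and>
     \<comment> \<open>the transitive closure of all edges is a strict partial order\<close>
     irrefl ((proc_succ M \<union> (\<Union>d\<in>DS. edges M d))\<^sup>+) \<and>
     \<comment> \<open>LIFO\<close>
     (\<forall>d \<in> DS. \<forall>e1 f1 e2 f2. (e1, f1) \<in> edges M d \<longrightarrow> (e2, f2) \<in> edges M d \<longrightarrow>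
          e1 < e2 \<longrightarrow> e2 < f1 \<longrightarrow> f2 < f1)"

definition is_interval :: "('a, 'd) cbm \<Rightarrow> nat set \<Rightarrow> bool" where
  "is_interval M I \<longleftrightarrow> I \<subseteq> events M \<and> (\<exists>e f. I = {e..f})"

definition is_context :: "('a, 'd) cbm \<Rightarrow> nat set \<Rightarrow> bool" where
  "is_context M I \<longleftrightarrow> is_interval M I \<and>
     (\<forall>d d' i j i' j'. (i, j) \<in> edges M d \<longrightarrow> (i', j') \<in> edges M d' \<longrightarrow>
        I \<inter> {i, j} \<noteq> {} \<longrightarrow> I \<inter> {i', j'} \<noteq> {} \<longrightarrow> d = d')"

definition context_bounded :: "nat \<Rightarrow> ('a, 'd) cbm \<Rightarrow> bool" where
  "context_bounded k M \<longleftrightarrow>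
     (\<exists>Is. length Is = k \<and> (\<forall>I \<in> set Is. is_context M I) \<and> events M = \<Union>(set Is))"

definition Context :: "'d set \<Rightarrow> 'a set \<Rightarrow> nat \<Rightarrow> ('a, 'd) cbm set" where
  "Context DS Sig k = {M. is_CBM DS Sig M \<and> context_bounded k M}"

datatype 'a atomprop = PProc | PLetter 'a

datatype 'd prog = PNext | PStack 'd

datatype ('a, 'd) sform =
    SAtom "'a atomprop"
  | SOr "('a, 'd) sform" "('a, 'd) sform"
  | SNot "('a, 'd) sform"
  | SDia "('a, 'd) pform" "('a, 'd) sform"
and ('a, 'd) pform =
    PAtom "'d prog"
  | PTest "('a, 'd) sform"
  | PPlus "('a, 'd) pform" "('a, 'd) pform"
  | PComp "('a, 'd) pform" "('a, 'd) pform"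
  | PStar "('a, 'd) pform"
  | PConv "('a, 'd) pform"

datatype ('a, 'd) sentence =
    SE "('a, 'd) sform"
  | SentOr "('a, 'd) sentence" "('a, 'd) sentence"
  | SentNot "('a, 'd) sentence"

fun wf_sform :: "'d set \<Rightarrow> 'a set \<Rightarrow> ('a, 'd) sform \<Rightarrow> bool"
and wf_pform :: "'d set \<Rightarrow> 'a set \<Rightarrow> ('a, 'd) pform \<Rightarrow> bool" where
  "wf_sform DS Sig (SAtom PProc) = True"
| "wf_sform DS Sig (SAtom (PLetter a)) = (a \<in> Sig)"
| "wf_sform DS Sig (SOr s t) = (wf_sform DS Sig s \<and> wf_sform DS Sig t)"
| "wf_sform DS Sig (SNot s) = wf_sform DS Sig s"
| "wf_sform DS Sig (SDia p s) = (wf_pform DS Sig p \<and> wf_sform DS Sig s)"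
| "wf_pform DS Sig (PAtom PNext) = True"
| "wf_pform DS Sig (PAtom (PStack d)) = (d \<in> DS)"
| "wf_pform DS Sig (PTest s) = wf_sform DS Sig s"
| "wf_pform DS Sig (PPlus p q) = (wf_pform DS Sig p \<and> wf_pform DS Sig q)"
| "wf_pform DS Sig (PComp p q) = (wf_pform DS Sig p \<and> wf_pform DS Sig q)"
| "wf_pform DS Sig (PStar p) = wf_pform DS Sig p"
| "wf_pform DS Sig (PConv p) = wf_pform DS Sig p"

fun wf_sentence :: "'d set \<Rightarrow> 'a set \<Rightarrow> ('a, 'd) sentence \<Rightarrow> bool" where
  "wf_sentence DS Sig (SE s) = wf_sform DS Sig s"
| "wf_sentence DS Sig (SentOr a b) = (wf_sentence DS Sig a \<and> wf_sentence DS Sig b)"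
| "wf_sentence DS Sig (SentNot a) = wf_sentence DS Sig a"

fun size_sform :: "('a, 'd) sform \<Rightarrow> nat"
and size_pform :: "('a, 'd) pform \<Rightarrow> nat" where
  "size_sform (SAtom q) = 1"
| "size_sform (SOr s t) = 1 + size_sform s + size_sform t"
| "size_sform (SNot s) = 1 + size_sform s"
| "size_sform (SDia p s) = 1 + size_pform p + size_sform s"
| "size_pform (PAtom g) = 1"
| "size_pform (PTest s) = 1 + size_sform s"
| "size_pform (PPlus p q) = 1 + size_pform p + size_pform q"
| "size_pform (PComp p q) = 1 + size_pform p + size_pform q"
| "size_pform (PStar p) = 1 + size_pform p"
| "size_pform (PConv p) = 1 + size_pform p"

fun size_sentence :: "('a, 'd) sentence \<Rightarrow> nat" where
  "size_sentence (SE s) = 1 + size_sform s"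
| "size_sentence (SentOr a b) = 1 + size_sentence a + size_sentence b"
| "size_sentence (SentNot a) = 1 + size_sentence a"

fun prog_sem :: "('a, 'd) cbm \<Rightarrow> 'd prog \<Rightarrow> (nat \<times> nat) set" where
  "prog_sem M PNext = proc_succ M"
| "prog_sem M (PStack d) = edges M d"

fun sem_s :: "('a, 'd) cbm \<Rightarrow> ('a, 'd) sform \<Rightarrow> nat set"
and sem_p :: "('a, 'd) cbm \<Rightarrow> ('a, 'd) pform \<Rightarrow> (nat \<times> nat) set" where
  "sem_s M (SAtom PProc) = events M"
| "sem_s M (SAtom (PLetter a)) = {e \<in> events M. lab M e = a}"
| "sem_s M (SOr s t) = sem_s M s \<union> sem_s M t"
| "sem_s M (SNot s) = events M - sem_s M s"
| "sem_s M (SDia p s) = {e \<in> events M. \<exists>f. (e, f) \<in> sem_p M p \<and> f \<in> sem_s M s}"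
| "sem_p M (PAtom g) = prog_sem M g"
| "sem_p M (PTest s) = Id_on (sem_s M s)"
| "sem_p M (PPlus p q) = sem_p M p \<union> sem_p M q"
| "sem_p M (PComp p q) = sem_p M p O sem_p M q"
| "sem_p M (PStar p) = Id_on (events M) \<union> (sem_p M p)\<^sup>+"
| "sem_p M (PConv p) = (sem_p M p)\<inverse>"

fun models :: "('a, 'd) cbm \<Rightarrow> ('a, 'd) sentence \<Rightarrow> bool" where
  "models M (SE s) = (\<exists>e. e \<in> sem_s M s)"
| "models M (SentOr a b) = (models M a \<or> models M b)"
| "models M (SentNot a) = (\<not> models M a)"

end

theory Submission
  imports Defs
begin

(* A CBM fails to be k-context-bounded exactly when it contains a chain of k
   switches x1 < y1 <= x2 < y2 <= ... <= xk < yk, where xi and yi are touched by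
   edges of different stacks.  A context containing xi cannot reach yi, so such a
   chain forces k + 1 contexts; conversely, cutting greedily just before the end of
   the first switch covers the word by intervals without switches, which are
   contexts.  A single switch is expressed by a CPDL program of size O(|DS|^2), and
   the chain by k nested diamonds. *)

definition STrue :: "('a, 'd) sform" where
  "STrue = SAtom PProc"

definition SAnd :: "('a, 'd) sform \<Rightarrow> ('a, 'd) sform \<Rightarrow> ('a, 'd) sform" where
  "SAnd s t = SNot (SOr (SNot s) (SNot t))"

definition PNextPlus :: "('a, 'd) pform" where
  "PNextPlus = PComp (PAtom PNext) (PStar (PAtom PNext))"

definition touch_form :: "'d \<Rightarrow> ('a, 'd) sform" where
  "touch_form d = SOr (SDia (PAtom (PStack d)) STrue) (SDia (PConv (PAtom (PStack d))) STrue)"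

primrec touch_any_form :: "'d list \<Rightarrow> ('a, 'd) sform" where
  "touch_any_form [] = SNot STrue"
| "touch_any_form (d # ds) = SOr (touch_form d) (touch_any_form ds)"

(* "Touches some stack other than d" is rendered as "touches a stack of ds, but not d";
   in a CBM the two agree because an event is the endpoint of at most one edge. *)
definition switch_from_prog :: "'d list \<Rightarrow> 'd \<Rightarrow> ('a, 'd) pform" where
  "switch_from_prog ds d = PComp (PTest (touch_form d))
     (PComp PNextPlus (PTest (SAnd (touch_any_form ds) (SNot (touch_form d)))))"

primrec switch_union_prog :: "'d list \<Rightarrow> 'd list \<Rightarrow> ('a, 'd) pform" where
  "switch_union_prog ds [] = PTest (SNot STrue)"
| "switch_union_prog ds (d # ds') = PPlus (switch_from_prog ds d) (switch_union_prog ds ds')"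

definition switch_prog :: "'d list \<Rightarrow> ('a, 'd) pform" where
  "switch_prog ds = PComp (PStar (PAtom PNext)) (switch_union_prog ds ds)"

primrec switches_form :: "'d list \<Rightarrow> nat \<Rightarrow> ('a, 'd) sform" where
  "switches_form ds 0 = STrue"
| "switches_form ds (Suc j) = SDia (switch_prog ds) (switches_form ds j)"

definition touches :: "('a, 'd) cbm \<Rightarrow> 'd \<Rightarrow> nat \<Rightarrow> bool" where
  "touches M d e \<longleftrightarrow> (\<exists>f. (e, f) \<in> edges M d \<or> (f, e) \<in> edges M d)"

definition switch_at :: "('a, 'd) cbm \<Rightarrow> nat \<Rightarrow> nat \<Rightarrow> bool" where
  "switch_at M x y \<longleftrightarrow> (\<exists>d d'. d \<noteq> d' \<and> touches M d x \<and> touches M d' y)"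

lemma sem_s_subset_events: "sem_s M s \<subseteq> events M"
proof (induct s rule: sform.induct[where ?P2.0 = "\<lambda>_. True"])
  case (SAtom q)
  then show ?case by (cases q) auto
qed auto

lemma sem_STrue [simp]: "sem_s M STrue = events M"
  by (simp add: STrue_def)

lemma sem_SAnd [simp]: "sem_s M (SAnd s t) = sem_s M s \<inter> sem_s M t"
  using sem_s_subset_events[of M s] sem_s_subset_events[of M t] by (auto simp: SAnd_def)

lemma trancl_proc_succ: "(proc_succ M)\<^sup>+ = {(a, b). a < b \<and> b < length (fst M)}"
proof (intro equalityI subsetI; clarify)
  fix a b assume "(a, b) \<in> (proc_succ M)\<^sup>+"
  then show "a < b \<and> b < length (fst M)"
    by (induction rule: trancl_induct) (auto simp: proc_succ_def)
next
  fix a b assume "a < b" "b < length (fst M)"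
  then show "(a, b) \<in> (proc_succ M)\<^sup>+"
  proof (induction b)
    case (Suc b)
    have step: "(b, Suc b) \<in> proc_succ M" using Suc.prems by (auto simp: proc_succ_def)
    show ?case
    proof (cases "a = b")
      case False
      then have "(a, b) \<in> (proc_succ M)\<^sup>+" using Suc by auto
      then show ?thesis using step by (rule trancl_into_trancl)
    qed (use step in auto)
  qed simp
qed

lemma sem_PStar_PNext: "sem_p M (PStar (PAtom PNext)) = {(a, b). a \<le> b \<and> b < length (fst M)}"
  by (auto simp: trancl_proc_succ events_def Id_on_def)

lemma sem_PNextPlus: "sem_p M PNextPlus = {(a, b). a < b \<and> b < length (fst M)}"
  unfolding PNextPlus_def sem_p.simps(4) sem_PStar_PNext
  by (auto simp: proc_succ_def)

lemma sem_touch_form: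
  assumes "edges M d \<subseteq> events M \<times> events M"
  shows "sem_s M (touch_form d) = {e. touches M d e}"
  using assms by (auto simp: touch_form_def touches_def)

lemma edges_subset_events: "is_CBM DS Sig M \<Longrightarrow> edges M d \<subseteq> events M \<times> events M"
  unfolding is_CBM_def by (cases "d \<in> DS") auto

lemma touches_in_DS: "is_CBM DS Sig M \<Longrightarrow> touches M d e \<Longrightarrow> d \<in> DS"
  unfolding is_CBM_def touches_def by blast

lemma touches_unique:
  assumes "is_CBM DS Sig M" "touches M d e" "touches M d' e"
  shows "d = d'"
proof (rule ccontr)
  assume "d \<noteq> d'"
  then have "{e1, f1} \<inter> {e2, f2} = {}" if "(e1, f1) \<in> edges M d" "(e2, f2) \<in> edges M d'"
    for e1 f1 e2 f2
    using assms(1) that unfolding is_CBM_def by blast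
  with assms(2,3) show False unfolding touches_def by blast
qed

lemma touches_other_iff:
  assumes "is_CBM DS Sig M"
  shows "(\<exists>d'. d \<noteq> d' \<and> touches M d' e) \<longleftrightarrow> (\<exists>d'\<in>DS. touches M d' e) \<and> \<not> touches M d e"
  by (metis touches_unique[OF assms] touches_in_DS[OF assms])

lemma sem_touch_any_form:
  "is_CBM DS Sig M \<Longrightarrow> sem_s M (touch_any_form ds) = {e. \<exists>d\<in>set ds. touches M d e}"
  by (induction ds) (auto simp: sem_touch_form[OF edges_subset_events])

lemma sem_switch_union_prog:
  assumes M: "is_CBM DS Sig M" and ds: "set ds = DS"
  shows "sem_p M (switch_union_prog ds ds') =
    {(x, y). x < y \<and> y < length (fst M) \<and> (\<exists>d\<in>set ds'. touches M d x \<and> (\<exists>d'. d \<noteq> d' \<and> touches M d' y))}"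
proof (induction ds')
  case (Cons d ds')
  have "sem_p M (switch_from_prog ds d) = {(x, y). x < y \<and> y < length (fst M) \<and>
      touches M d x \<and> (\<exists>d'\<in>DS. touches M d' y) \<and> \<not> touches M d y}"
    by (auto simp: switch_from_prog_def sem_PNextPlus sem_touch_form[OF edges_subset_events[OF M]]
        sem_touch_any_form[OF M] ds Id_on_def relcomp_unfold events_def)
  also have "\<dots> = {(x, y). x < y \<and> y < length (fst M) \<and>
      touches M d x \<and> (\<exists>d'. d \<noteq> d' \<and> touches M d' y)}"
    by (simp add: touches_other_iff[OF M])
  finally have "sem_p M (switch_from_prog ds d) = \<dots>" .
  with Cons.IH show ?case by auto
qed (auto simp: Id_on_def)

lemma sem_switch_prog:
  assumes "is_CBM DS Sig M" "set ds = DS"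
  shows "sem_p M (switch_prog ds) =
    {(e, y). \<exists>x. e \<le> x \<and> x < y \<and> y < length (fst M) \<and> switch_at M x y}"
  using touches_in_DS[OF assms(1)]
  unfolding switch_prog_def sem_p.simps(4) sem_PStar_PNext sem_switch_union_prog[OF assms]
  by (fastforce simp: switch_at_def assms(2))

lemma sem_switches_form_Suc:
  assumes "is_CBM DS Sig M" "set ds = DS"
  shows "sem_s M (switches_form ds (Suc j)) =
    {e. \<exists>x y. e \<le> x \<and> x < y \<and> switch_at M x y \<and> y \<in> sem_s M (switches_form ds j)}"
  using sem_s_subset_events[of M "switches_form ds j"]
  by (fastforce simp: sem_switch_prog[OF assms] events_def)

lemma empty_is_context: "is_context M {}"
proof -
  have "{} = {1..0::nat}" by simp
  then show ?thesis unfolding is_context_def is_interval_def by blast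
qed

lemma context_between:
  assumes "is_context M I" "x \<in> I" "z \<in> I" "x \<le> y" "y \<le> z"
  shows "y \<in> I"
  using assms unfolding is_context_def is_interval_def by auto

lemma context_no_switch:
  assumes "is_context M I" "x \<in> I" "y \<in> I"
  shows "\<not> switch_at M x y"
proof
  assume "switch_at M x y"
  then obtain d d' f g where "d \<noteq> d'" "(x, f) \<in> edges M d \<or> (f, x) \<in> edges M d"
    "(y, g) \<in> edges M d' \<or> (g, y) \<in> edges M d'"
    unfolding switch_at_def touches_def by blast
  with assms show False unfolding is_context_def by blast
qed

lemma is_context_if_no_switch:
  assumes M: "is_CBM DS Sig M" and b: "b < length (fst M)"
    and no_switch: "\<And>x y. a \<le> x \<Longrightarrow> x < y \<Longrightarrow> y \<le> b \<Longrightarrow> \<not> switch_at M x y"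
  shows "is_context M {a..b}"
  unfolding is_context_def
proof (intro conjI allI impI)
  show "is_interval M {a..b}" using b unfolding is_interval_def events_def by auto
next
  fix d d' i j i' j'
  assume "(i, j) \<in> edges M d" "(i', j') \<in> edges M d'"
    and "{a..b} \<inter> {i, j} \<noteq> {}" "{a..b} \<inter> {i', j'} \<noteq> {}"
  then obtain p q where p: "p \<in> {a..b}" "touches M d p" and q: "q \<in> {a..b}" "touches M d' q"
    unfolding touches_def by blast
  show "d = d'"
  proof (rule ccontr)
    assume "d \<noteq> d'"
    then have "switch_at M p q" "switch_at M q p"
      using p(2) q(2) unfolding switch_at_def by (blast, metis)
    moreover have "p \<noteq> q" using touches_unique[OF M p(2)] q(2) \<open>d \<noteq> d'\<close> p by blast
    ultimately show False using no_switch p q by (cases "p < q") auto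
  qed
qed

lemma card_contexts_after_switch_less:
  assumes S: "finite S" "\<forall>I\<in>S. is_context M I" "events M \<subseteq> \<Union>S"
    and xy: "e \<le> x" "x < y" "y < length (fst M)" "switch_at M x y"
  shows "card {I\<in>S. \<exists>z\<in>I. y \<le> z} < card {I\<in>S. \<exists>z\<in>I. e \<le> z}"
proof (rule psubset_card_mono)
  have "x \<in> events M" using xy unfolding events_def by simp
  then obtain Ix where Ix: "Ix \<in> S" "x \<in> Ix" using S by blast
  have "Ix \<notin> {I\<in>S. \<exists>z\<in>I. y \<le> z}"
  proof
    assume "Ix \<in> {I\<in>S. \<exists>z\<in>I. y \<le> z}"
    then obtain z where "z \<in> Ix" "y \<le> z" by blast
    then have "y \<in> Ix" using context_between[of M Ix x z y] S(2) Ix xy(2) by simp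
    then show False using context_no_switch[of M Ix x y] S(2) Ix xy(4) by blast
  qed
  moreover have "Ix \<in> {I\<in>S. \<exists>z\<in>I. e \<le> z}" using Ix xy(1) by blast
  moreover have "{I\<in>S. \<exists>z\<in>I. y \<le> z} \<subseteq> {I\<in>S. \<exists>z\<in>I. e \<le> z}"
  proof clarify
    fix I z assume "I \<in> S" "z \<in> I" "y \<le> z"
    then show "\<exists>z\<in>I. e \<le> z" using xy(1,2) by (intro bexI[of _ z]) simp_all
  qed
  ultimately show "{I\<in>S. \<exists>z\<in>I. y \<le> z} \<subset> {I\<in>S. \<exists>z\<in>I. e \<le> z}" by blast
qed (use S(1) in simp)

lemma card_contexts_after_switches_form:
  assumes M: "is_CBM DS Sig M" and ds: "set ds = DS"
    and S: "finite S" "\<forall>I\<in>S. is_context M I" "events M \<subseteq> \<Union>S"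
  shows "e \<in> sem_s M (switches_form ds j) \<Longrightarrow> j < card {I\<in>S. \<exists>z\<in>I. e \<le> z}"
proof (induction j arbitrary: e)
  case 0
  then obtain I where "I \<in> S" "e \<in> I" using S(3) by auto
  then show ?case using S(1) by (auto simp: card_gt_0_iff)
next
  case (Suc j)
  then obtain x y where xy: "e \<le> x" "x < y" "switch_at M x y"
    and y: "y \<in> sem_s M (switches_form ds j)"
    unfolding sem_switches_form_Suc[OF M ds] by blast
  have "y < length (fst M)" using y sem_s_subset_events by (fastforce simp: events_def)
  from card_contexts_after_switch_less[OF S xy(1,2) this xy(3)] Suc.IH[OF y]
  show ?case by simp
qed

lemma first_switch:
  assumes "e \<le> x" "x < y" "switch_at M x y"
  obtains x0 y0 where "e \<le> x0" "x0 < y0" "y0 \<le> y" "switch_at M x0 y0"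
    and "\<And>x' y'. e \<le> x' \<Longrightarrow> x' < y' \<Longrightarrow> y' < y0 \<Longrightarrow> \<not> switch_at M x' y'"
proof -
  define P where "P y' \<longleftrightarrow> (\<exists>x'. e \<le> x' \<and> x' < y' \<and> switch_at M x' y')" for y'
  have "P y" using assms unfolding P_def by blast
  then have "P (Least P)" "Least P \<le> y" by (auto intro: LeastI Least_le)
  moreover have "\<not> P y'" if "y' < Least P" for y' using not_less_Least[OF that] .
  ultimately show ?thesis using that unfolding P_def by blast
qed

lemma contexts_cover_if_not_switches_form:
  assumes M: "is_CBM DS Sig M" and ds: "set ds = DS"
  shows "e \<notin> sem_s M (switches_form ds j) \<Longrightarrow>
    \<exists>Is. length Is = j \<and> (\<forall>I\<in>set Is. is_context M I) \<and> {e..<length (fst M)} \<subseteq> \<Union>(set Is)"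
proof (induction j arbitrary: e)
  case 0
  then show ?case by (auto simp: events_def)
next
  case (Suc j)
  let ?n = "length (fst M)"
  show ?case
  proof (cases "\<exists>x y. e \<le> x \<and> x < y \<and> y < ?n \<and> switch_at M x y")
    case no_switch: False
    show ?thesis
    proof (cases "e < ?n")
      case True
      with no_switch have "is_context M {e..?n - 1}"
        by (intro is_context_if_no_switch[OF M]) auto
      then show ?thesis
        by (intro exI[of _ "{e..?n - 1} # replicate j {}"]) (auto simp: empty_is_context)
    next
      case False
      then show ?thesis
        by (intro exI[of _ "replicate (Suc j) {}"]) (auto simp: empty_is_context)
    qed
  next
    case True
    then obtain x y where "e \<le> x" "x < y" "y < ?n" "switch_at M x y" by blast
    moreover obtain x0 y0 where xy0: "e \<le> x0" "x0 < y0" "y0 \<le> y" "switch_at M x0 y0"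
      and first: "\<And>x' y'. e \<le> x' \<Longrightarrow> x' < y' \<Longrightarrow> y' < y0 \<Longrightarrow> \<not> switch_at M x' y'"
      using first_switch[OF calculation(1,2,4)] by blast
    ultimately have "y0 < ?n" by simp
    have "y0 \<notin> sem_s M (switches_form ds j)"
      using Suc.prems xy0 \<open>y0 < ?n\<close> unfolding sem_switches_form_Suc[OF M ds] by blast
    then obtain Is where Is: "length Is = j" "\<forall>I\<in>set Is. is_context M I"
      "{y0..<?n} \<subseteq> \<Union>(set Is)" using Suc.IH by blast
    have "is_context M {e..y0 - 1}"
      using xy0 first \<open>y0 < ?n\<close> by (intro is_context_if_no_switch[OF M]) auto
    moreover have "{e..<?n} \<subseteq> {e..y0 - 1} \<union> {y0..<?n}" by auto
    ultimately show ?thesis using Is by (intro exI[of _ "{e..y0 - 1} # Is"]) auto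
  qed
qed

definition context_sentence :: "'d list \<Rightarrow> nat \<Rightarrow> ('a, 'd) sentence" where
  "context_sentence ds k = SentNot (SE (switches_form ds k))"

lemma models_context_sentence_iff:
  assumes M: "is_CBM DS Sig M" and ds: "set ds = DS"
  shows "models M (context_sentence ds k) \<longleftrightarrow> M \<in> Context DS Sig k"
proof
  assume "models M (context_sentence ds k)"
  then have "0 \<notin> sem_s M (switches_form ds k)" by (simp add: context_sentence_def)
  from contexts_cover_if_not_switches_form[OF M ds this] obtain Is where Is: "length Is = k"
    "\<forall>I\<in>set Is. is_context M I" "{0..<length (fst M)} \<subseteq> \<Union>(set Is)" by blast
  moreover have "\<Union>(set Is) \<subseteq> events M"
    using Is(2) unfolding is_context_def is_interval_def by blast
  ultimately show "M \<in> Context DS Sig k"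
    using M unfolding Context_def context_bounded_def events_def by blast
next
  assume "M \<in> Context DS Sig k"
  then obtain Is where Is: "length Is = k" "\<forall>I\<in>set Is. is_context M I" "events M = \<Union>(set Is)"
    unfolding Context_def context_bounded_def by blast
  have "k < card {I\<in>set Is. \<exists>z\<in>I. e \<le> z}" if "e \<in> sem_s M (switches_form ds k)" for e
    using card_contexts_after_switches_form[OF M ds _ _ _ that] Is by simp
  moreover have "card {I\<in>set Is. \<exists>z\<in>I. e \<le> z} \<le> k" for e
  proof -
    have "card {I\<in>set Is. \<exists>z\<in>I. e \<le> z} \<le> card (set Is)" by (rule card_mono) auto
    also have "\<dots> \<le> k" using card_length[of Is] Is(1) by simp
    finally show ?thesis .
  qed
  ultimately show "models M (context_sentence ds k)"
    by (auto simp: context_sentence_def dest: leD)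
qed

lemma wf_touch_form: "d \<in> DS \<Longrightarrow> wf_sform DS Sig (touch_form d)"
  by (simp add: touch_form_def STrue_def)

lemma wf_touch_any_form: "set ds \<subseteq> DS \<Longrightarrow> wf_sform DS Sig (touch_any_form ds)"
  by (induction ds) (auto simp: STrue_def wf_touch_form)

lemma wf_switch_union_prog:
  "set ds \<subseteq> DS \<Longrightarrow> set ds' \<subseteq> DS \<Longrightarrow> wf_pform DS Sig (switch_union_prog ds ds')"
  by (induction ds') (auto simp: STrue_def switch_from_prog_def SAnd_def PNextPlus_def
      wf_touch_form wf_touch_any_form)

lemma wf_context_sentence: "set ds \<subseteq> DS \<Longrightarrow> wf_sentence DS Sig (context_sentence ds k)"
  by (induction k) (auto simp: context_sentence_def STrue_def switch_prog_def wf_switch_union_prog)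

lemma size_touch_any_form: "size_sform (touch_any_form ds) = 2 + 9 * length ds"
  by (induction ds) (auto simp: STrue_def touch_form_def)

lemma size_switch_union_prog:
  "size_pform (switch_union_prog ds ds') = 3 + length ds' * (32 + 9 * length ds)"
  by (induction ds') (auto simp: STrue_def switch_from_prog_def touch_form_def SAnd_def
      PNextPlus_def size_touch_any_form)

lemma size_context_sentence:
  "size_sentence (context_sentence ds k) = 3 + k * (7 + length ds * (32 + 9 * length ds))"
proof -
  have "size_sform (switches_form ds k) = 1 + k * (7 + length ds * (32 + 9 * length ds))"
    by (induction k) (auto simp: STrue_def switch_prog_def size_switch_union_prog)
  then show ?thesis by (simp add: context_sentence_def)
qed

lemma size_context_sentence_le:
  assumes "k > 0"
  shows "size_sentence (context_sentence ds k) \<le> 51 * k * max 1 ((length ds)\<^sup>2)"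
proof -
  define L m where "L = length ds" and "m = max 1 (L\<^sup>2)"
  have m: "1 \<le> m" "L * L \<le> m" by (simp_all add: m_def power2_eq_square)
  have "L \<le> L * L" by (cases L) auto
  have "7 + L * (32 + 9 * L) = 7 + 32 * L + 9 * (L * L)" by (simp add: algebra_simps)
  also have "\<dots> \<le> 48 * m" using m \<open>L \<le> L * L\<close> by linarith
  finally have "7 + L * (32 + 9 * L) \<le> 48 * m" .
  then have "k * (7 + L * (32 + 9 * L)) \<le> k * (48 * m)" by (rule mult_le_mono2)
  moreover have "3 \<le> 3 * (k * m)" using assms m(1) by simp
  ultimately have "3 + k * (7 + L * (32 + 9 * L)) \<le> 51 * (k * m)" by linarith
  then show ?thesis by (simp add: size_context_sentence L_def m_def mult.assoc)
qed

theorem mainTheorem18: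
  "\<exists>C :: nat. \<forall>(DS :: 'd set) (Sig :: 'a set). finite DS \<longrightarrow> finite Sig \<longrightarrow>
     (\<forall>k > 0. \<exists>\<Phi> :: ('a, 'd) sentence.
        wf_sentence DS Sig \<Phi> \<and>
        size_sentence \<Phi> \<le> C * k * max 1 ((card DS)\<^sup>2) \<and>
        (\<forall>M. is_CBM DS Sig M \<longrightarrow> (models M \<Phi> \<longleftrightarrow> M \<in> Context DS Sig k)))"
proof (intro exI[of _ 51] allI impI)
  fix DS :: "'d set" and Sig :: "'a set" and k :: nat
  assume "finite DS" "finite Sig" "k > 0"
  then obtain ds where ds: "set ds = DS" "distinct ds" using finite_distinct_list by blast
  then have "card DS = length ds" using distinct_card by blast
  then show "\<exists>\<Phi> :: ('a, 'd) sentence. wf_sentence DS Sig \<Phi> \<and>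
      size_sentence \<Phi> \<le> 51 * k * max 1 ((card DS)\<^sup>2) \<and>
      (\<forall>M. is_CBM DS Sig M \<longrightarrow> (models M \<Phi> \<longleftrightarrow> M \<in> Context DS Sig k))"
    using wf_context_sentence[of ds DS Sig k] size_context_sentence_le[OF \<open>k > 0\<close>, of ds]
      models_context_sentence_iff[OF _ ds(1)] ds(1)
    by (intro exI[of _ "context_sentence ds k"]) auto
qed

end
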